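(* For every prime power $k$, there exists a hypergraph $\widehat{\mathcal{A}_k}=(V,E)$ (obtained from the field plane $\mathcal{A}_k$ by deleting $k-1$ pairwise parallel lines) which is linear and $k$-uniform with $|V|=k^2$, $|E|=k^2+1$, having a hyperedge $e_0$ with $\mathrm{deg}(x)=k+1$ for all $x\in e_0$ and $\mathrm{deg}(x)\ge k$ for all $x\in V\smallsetminus e_0$, and such that: (i) $\mathrm{q}(\widehat{\mathcal{A}_k})=k+1$; (ii) $\widehat{\mathcal{A}_k}$ is not maximal for inclusion among linear $k$-uniform hypergraphs on the same $k^2$ vertices (some hyperedge can be added preserving linearity and $k$-uniformity); (iii) $\widehat{\mathcal{A}_k}$ has exactly one critical hyperedge, namely the unique hyperedge $e_0$ with the degree properties above.
   Context: For a prime power $k$, the field plane $\mathcal{A}_k$ is the hypergraph with vertex set $\mathbb{F}_k^2$ whose hyperedges are the $k^2+k$ affine lines of $\mathbb{F}_k^2$. A hypergraph $(V,E)$ is linear if distinct hyperedges share at most one vertex, $k$-uniform if every hyperedge has $k$ elements; $\mathrm{deg}(x)$ is the number of hyperedges containing $x$. The chromatic index $\mathrm{q}$ is the least number of colors in a coloring of hyperedges where distinct intersecting hyperedges get different colors. A hyperedge $e$ is critical if $\mathrm{q}((V,E\smallsetminus\{e\}))=\mathrm{q}((V,E))-1$. *)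

theory Defs
  imports Main "HOL-Library.Cardinality"
begin

definition hyperedge_set :: "'v set \<times> 'v set set \<Rightarrow> bool" where
  "hyperedge_set H \<longleftrightarrow> (\<forall>e\<in>snd H. e \<subseteq> fst H)"

definition linear_hg :: "'v set \<times> 'v set set \<Rightarrow> bool" where
  "linear_hg H \<longleftrightarrow> (\<forall>e1\<in>snd H. \<forall>e2\<in>snd H. e1 \<noteq> e2 \<longrightarrow> card (e1 \<inter> e2) \<le> 1)"

definition uniform_hg :: "nat \<Rightarrow> 'v set \<times> 'v set set \<Rightarrow> bool" where
  "uniform_hg k H \<longleftrightarrow> (\<forall>e\<in>snd H. finite e \<and> card e = k)"

definition deg :: "'v set \<times> 'v set set \<Rightarrow> 'v \<Rightarrow> nat" where
  "deg H x = card {e \<in> snd H. x \<in> e}"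

definition proper_edge_colouring :: "'v set \<times> 'v set set \<Rightarrow> nat \<Rightarrow> ('v set \<Rightarrow> nat) \<Rightarrow> bool" where
  "proper_edge_colouring H n c \<longleftrightarrow>
     (\<forall>e\<in>snd H. c e < n) \<and>
     (\<forall>e1\<in>snd H. \<forall>e2\<in>snd H. e1 \<noteq> e2 \<and> e1 \<inter> e2 \<noteq> {} \<longrightarrow> c e1 \<noteq> c e2)"

definition chromatic_index :: "'v set \<times> 'v set set \<Rightarrow> nat" where
  "chromatic_index H = (LEAST n. \<exists>c. proper_edge_colouring H n c)"

definition critical_edge :: "'v set \<times> 'v set set \<Rightarrow> 'v set \<Rightarrow> bool" where
  "critical_edge H e \<longleftrightarrow> e \<in> snd H \<and>
     chromatic_index (fst H, snd H - {e}) = chromatic_index H - 1"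

definition affine_line :: "'a::field \<times> 'a \<Rightarrow> 'a \<times> 'a \<Rightarrow> ('a \<times> 'a) set" where
  "affine_line p d = {(fst p + t * fst d, snd p + t * snd d) | t. True}"

definition affine_lines :: "('a::field \<times> 'a) set set" where
  "affine_lines = {affine_line p d | p d. d \<noteq> (0, 0)}"

definition parallel_lines :: "('a::field \<times> 'a) set \<Rightarrow> ('a \<times> 'a) set \<Rightarrow> bool" where
  "parallel_lines L1 L2 \<longleftrightarrow>
     (\<exists>p q d. d \<noteq> (0, 0) \<and> L1 = affine_line p d \<and> L2 = affine_line q d)"

text \<open>The field plane A_k over the finite field 'a (k = CARD('a)).\<close>
definition field_plane :: "('a::{finite,field} \<times> 'a) set \<times> ('a \<times> 'a) set set" where
  "field_plane = (UNIV, affine_lines)"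

end

(*
  Colour every non-vertical line by its slope: lines of equal slope are parallel, hence disjoint,
  so k colours suffice for them, and the one remaining vertical line x = 0 receives colour k + 1.
  Both colourings are optimal because a hypergraph needs at least as many colours as its maximum
  degree: points of x = 0 have degree k + 1, all other points degree k. Deleting x = 0 therefore
  lowers the chromatic index to k, whereas deleting any other line e leaves a point of x = 0
  outside e, still of degree k + 1, so e is not critical.
*)
theory Submission
  imports Defs
begin

section \<open>Edge colourings of hypergraphs\<close>

lemma proper_edge_colouring_mono:
  "proper_edge_colouring (V, E) n c \<Longrightarrow> E' \<subseteq> E \<Longrightarrow> proper_edge_colouring (V', E') n c"
  unfolding proper_edge_colouring_def by (simp add: subset_iff)

lemma proper_edge_colouring_insert_fresh:
  "proper_edge_colouring (V, E) n c \<Longrightarrow> proper_edge_colouring (V, insert e E) (Suc n) (c(e := n))"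
  unfolding proper_edge_colouring_def by (auto simp: less_Suc_eq)

lemma proper_edge_colouring_exists:
  assumes "finite (snd H)"
  shows "\<exists>c. proper_edge_colouring H (card (snd H)) c"
proof -
  obtain f where "bij_betw f (snd H) {0..<card (snd H)}"
    using ex_bij_betw_finite_nat assms by blast
  then have "proper_edge_colouring H (card (snd H)) f"
    unfolding proper_edge_colouring_def bij_betw_def inj_on_def by auto
  then show ?thesis by blast
qed

lemma deg_le_colours:
  assumes "proper_edge_colouring H n c"
  shows "deg H x \<le> n"
proof -
  let ?S = "{e \<in> snd H. x \<in> e}"
  have "inj_on c ?S"
    using assms unfolding proper_edge_colouring_def inj_on_def by blast
  moreover have "c ` ?S \<subseteq> {..<n}"
    using assms unfolding proper_edge_colouring_def by auto
  ultimately have "card ?S \<le> card {..<n}"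
    by (intro card_inj_on_le) auto
  then show ?thesis by (simp add: deg_def)
qed

lemma chromatic_index_le:
  "proper_edge_colouring H n c \<Longrightarrow> chromatic_index H \<le> n"
  unfolding chromatic_index_def by (rule Least_le) blast

lemma deg_le_chromatic_index:
  assumes "finite (snd H)"
  shows "deg H x \<le> chromatic_index H"
proof -
  have "\<exists>c. proper_edge_colouring H (chromatic_index H) c"
    unfolding chromatic_index_def
    by (rule LeastI_ex) (use proper_edge_colouring_exists[OF assms] in blast)
  then show ?thesis by (blast intro: deg_le_colours)
qed

lemma chromatic_index_eqI:
  "proper_edge_colouring H n c \<Longrightarrow> finite (snd H) \<Longrightarrow> deg H x = n \<Longrightarrow> chromatic_index H = n"
  using chromatic_index_le deg_le_chromatic_index by (metis le_antisym)

lemma deg_Diff_edge: "x \<notin> e \<Longrightarrow> deg (V, E - {e}) x = deg (V, E) x"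
  unfolding deg_def by (rule arg_cong[where f = card]) auto

lemma deg_insert_edge:
  assumes "finite E" "e \<notin> E"
  shows "deg (V, insert e E) x = deg (V, E) x + (if x \<in> e then 1 else 0)"
proof -
  have "{e' \<in> insert e E. x \<in> e'} =
      (if x \<in> e then insert e {e' \<in> E. x \<in> e'} else {e' \<in> E. x \<in> e'})"
    by auto
  then show ?thesis
    using assms by (simp add: deg_def)
qed

lemma not_critical_edgeI:
  assumes "finite E" "proper_edge_colouring (V, E) n c" "deg (V, E) x = n" "x \<notin> e" "0 < n"
  shows "\<not> critical_edge (V, E) e"
proof -
  have "chromatic_index (V, E) = n"
    using assms by (intro chromatic_index_eqI) auto
  moreover have "chromatic_index (V, E - {e}) = n"
    using assms by (intro chromatic_index_eqI[where x = x])
      (auto simp: deg_Diff_edge intro: proper_edge_colouring_mono)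
  ultimately show ?thesis
    using \<open>0 < n\<close> by (auto simp: critical_edge_def)
qed

section \<open>Lines of the affine plane over a field\<close>

definition vertical_line :: "'a::field \<Rightarrow> ('a \<times> 'a) set" where
  "vertical_line a = {p. fst p = a}"

definition nonvertical_line :: "'a::field \<Rightarrow> 'a \<Rightarrow> ('a \<times> 'a) set" where
  "nonvertical_line m b = {p. snd p = m * fst p + b}"

definition nonvertical_lines :: "('a::field \<times> 'a) set set" where
  "nonvertical_lines = range (case_prod nonvertical_line)"

lemma mem_nonvertical_lines: "L \<in> nonvertical_lines \<longleftrightarrow> (\<exists>m b. L = nonvertical_line m b)"
  by (auto simp: nonvertical_lines_def)

lemma nonvertical_line_in_nonvertical_lines [simp]: "nonvertical_line m b \<in> nonvertical_lines"
  by (auto simp: mem_nonvertical_lines)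

lemma mem_vertical_line [simp]: "p \<in> vertical_line a \<longleftrightarrow> fst p = a"
  by (simp add: vertical_line_def)

lemma mem_nonvertical_line [simp]: "p \<in> nonvertical_line m b \<longleftrightarrow> snd p = m * fst p + b"
  by (simp add: nonvertical_line_def)

lemma vertical_line_eq_iff [simp]: "vertical_line a = vertical_line a' \<longleftrightarrow> a = a'"
  by (metis fst_conv mem_vertical_line)

lemma nonvertical_line_eq_iff [simp]:
  "nonvertical_line m b = nonvertical_line m' b' \<longleftrightarrow> m = m' \<and> b = b'"
proof
  assume eq: "nonvertical_line m b = nonvertical_line m' b'"
  have "(0, b) \<in> nonvertical_line m' b'" and "(1, m + b) \<in> nonvertical_line m' b'"
    by (simp_all flip: eq)
  then show "m = m' \<and> b = b'" by simp
qed simp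

lemma vertical_line_neq_nonvertical_line [simp]:
  "vertical_line a \<noteq> nonvertical_line m b" "nonvertical_line m b \<noteq> vertical_line a"
proof -
  have "(a, m * a + b + 1) \<in> vertical_line a - nonvertical_line m b" by simp
  then show "vertical_line a \<noteq> nonvertical_line m b" "nonvertical_line m b \<noteq> vertical_line a"
    by (metis Diff_cancel empty_iff)+
qed

lemma vertical_line_eq_affine_line: "vertical_line a = affine_line (a, 0) (0, 1)"
  unfolding affine_line_def by (auto intro: prod_eqI)

lemma nonvertical_line_eq_affine_line: "nonvertical_line m b = affine_line (0, b) (1, m)"
  unfolding affine_line_def by (auto simp: algebra_simps)

lemma affine_line_vertical:
  assumes "d2 \<noteq> 0"
  shows "affine_line (p1, p2) (0, d2) = vertical_line p1"
proof (intro set_eqI iffI)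
  fix x :: "'a \<times> 'a"
  assume "x \<in> vertical_line p1"
  then have "x = (p1 + ((snd x - p2) / d2) * 0, p2 + ((snd x - p2) / d2) * d2)"
    using assms by (cases x) simp
  then show "x \<in> affine_line (p1, p2) (0, d2)"
    unfolding affine_line_def fst_conv snd_conv by blast
qed (auto simp: affine_line_def)

lemma affine_line_nonvertical:
  assumes "d1 \<noteq> 0"
  shows "affine_line (p1, p2) (d1, d2) = nonvertical_line (d2 / d1) (p2 - d2 / d1 * p1)"
proof (intro set_eqI iffI)
  fix x :: "'a \<times> 'a"
  assume "x \<in> nonvertical_line (d2 / d1) (p2 - d2 / d1 * p1)"
  then have "x = (p1 + ((fst x - p1) / d1) * d1, p2 + ((fst x - p1) / d1) * d2)"
    using assms by (cases x) (simp add: field_simps)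
  then show "x \<in> affine_line (p1, p2) (d1, d2)"
    unfolding affine_line_def fst_conv snd_conv by blast
qed (use assms in \<open>auto simp: affine_line_def field_simps\<close>)

lemma affine_line_in_affine_lines: "d \<noteq> (0, 0) \<Longrightarrow> affine_line p d \<in> affine_lines"
  unfolding affine_lines_def by blast

lemma vertical_line_in_affine_lines: "vertical_line a \<in> affine_lines"
  by (simp add: vertical_line_eq_affine_line affine_line_in_affine_lines)

lemma nonvertical_line_in_affine_lines: "nonvertical_line m b \<in> affine_lines"
  by (simp add: nonvertical_line_eq_affine_line affine_line_in_affine_lines)

lemma affine_lines_eq:
  "(affine_lines :: ('a::field \<times> 'a) set set) = range vertical_line \<union> nonvertical_lines"
proof
  show "affine_lines \<subseteq> range vertical_line \<union> nonvertical_lines"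
  proof
    fix L
    assume "L \<in> affine_lines"
    then obtain p1 p2 d1 d2 where L: "L = affine_line (p1, p2) (d1, d2)" and "(d1, d2) \<noteq> (0, 0)"
      unfolding affine_lines_def by auto
    then consider "d1 = 0" "d2 \<noteq> 0" | "d1 \<noteq> 0" by auto
    then show "L \<in> range vertical_line \<union> nonvertical_lines"
    proof cases
      case 1
      then show ?thesis using L by (simp add: affine_line_vertical)
    next
      case 2
      then show ?thesis using L by (simp add: affine_line_nonvertical)
    qed
  qed
  show "range vertical_line \<union> nonvertical_lines \<subseteq> affine_lines"
    unfolding nonvertical_lines_def
    by (auto simp: vertical_line_in_affine_lines nonvertical_line_in_affine_lines)
qed

definition line_through :: "'a::field \<times> 'a \<Rightarrow> 'a \<times> 'a \<Rightarrow> ('a \<times> 'a) set" where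
  "line_through p q =
     (if fst p = fst q then vertical_line (fst p)
      else let m = (snd q - snd p) / (fst q - fst p) in nonvertical_line m (snd p - m * fst p))"

lemma affine_line_eq_line_through:
  assumes "L \<in> affine_lines" "p \<in> L" "q \<in> L" "p \<noteq> q"
  shows "L = line_through p q"
proof -
  consider a where "L = vertical_line a" | m b where "L = nonvertical_line m b"
    using assms(1) by (auto simp: affine_lines_eq mem_nonvertical_lines)
  then show ?thesis
  proof cases
    case 1
    then show ?thesis
      using assms(2,3) by (simp add: line_through_def)
  next
    case (2 m b)
    with assms(2-4) have "fst p \<noteq> fst q"
      by (auto intro: prod_eqI)
    moreover from 2 assms(2,3)
    have "snd q - snd p = m * (fst q - fst p)" "b = snd p - m * fst p"
      by (simp_all add: algebra_simps)
    ultimately show ?thesis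
      using 2 by (simp add: line_through_def)
  qed
qed

lemma card_inter_affine_lines_le_1:
  assumes "L1 \<in> affine_lines" "L2 \<in> affine_lines" "L1 \<noteq> L2"
  shows "card (L1 \<inter> L2) \<le> 1"
proof -
  have "p = q" if "p \<in> L1 \<inter> L2" "q \<in> L1 \<inter> L2" for p q
  proof (rule ccontr)
    assume "p \<noteq> q"
    with that assms have "L1 = line_through p q" "L2 = line_through p q"
      by (metis IntD1 IntD2 affine_line_eq_line_through)+
    with assms(3) show False by simp
  qed
  then have "L1 \<inter> L2 = {} \<or> (\<exists>p. L1 \<inter> L2 = {p})" by blast
  then show ?thesis by auto
qed

lemma linear_hg_affine_lines: "F \<subseteq> affine_lines \<Longrightarrow> linear_hg (V, F)"
  unfolding linear_hg_def snd_conv using card_inter_affine_lines_le_1 by blast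

lemma card_vertical_line: "card (vertical_line (a :: 'a::{finite,field})) = CARD('a)"
proof -
  have "vertical_line a = Pair a ` UNIV" by auto
  then show ?thesis by (simp add: card_image inj_on_def)
qed

lemma card_nonvertical_line: "card (nonvertical_line m (b :: 'a::{finite,field})) = CARD('a)"
proof -
  have "nonvertical_line m b = (\<lambda>x. (x, m * x + b)) ` UNIV" by auto
  then show ?thesis by (simp add: card_image inj_on_def)
qed

lemma card_affine_line:
  "L \<in> (affine_lines :: ('a::{finite,field} \<times> 'a) set set) \<Longrightarrow> card L = CARD('a)"
  unfolding affine_lines_eq nonvertical_lines_def
  by (auto simp: card_vertical_line card_nonvertical_line)

lemma uniform_hg_affine_lines:
  "F \<subseteq> (affine_lines :: ('a::{finite,field} \<times> 'a) set set) \<Longrightarrow> uniform_hg CARD('a) (V, F)"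
  unfolding uniform_hg_def by (auto simp: card_affine_line)

lemma parallel_vertical_lines: "parallel_lines (vertical_line a) (vertical_line b)"
  unfolding parallel_lines_def vertical_line_eq_affine_line
  by (intro exI[of _ "(a, 0)"] exI[of _ "(b, 0)"] exI[of _ "(0, 1)"]) simp

definition slope :: "('a::field \<times> 'a) set \<Rightarrow> 'a" where
  "slope L = (THE m. \<exists>b. L = nonvertical_line m b)"

lemma slope_nonvertical_line [simp]: "slope (nonvertical_line m b) = m"
  unfolding slope_def by (rule the_equality) auto

lemma nonvertical_lines_parallel_disjoint:
  "b \<noteq> b' \<Longrightarrow> nonvertical_line m b \<inter> nonvertical_line m b' = {}"
  by auto

lemma proper_edge_colouring_by_slope:
  assumes "inj f" "\<And>m. f m < n"
  shows "proper_edge_colouring (V, nonvertical_lines) n (f \<circ> slope)"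
  unfolding proper_edge_colouring_def snd_conv
proof (intro conjI ballI impI)
  fix e
  show "(f \<circ> slope) e < n" using assms(2) by simp
next
  fix e1 e2 :: "('a \<times> 'a) set"
  assume "e1 \<in> nonvertical_lines" "e2 \<in> nonvertical_lines" and meet: "e1 \<noteq> e2 \<and> e1 \<inter> e2 \<noteq> {}"
  then obtain m b m' b' where e: "e1 = nonvertical_line m b" "e2 = nonvertical_line m' b'"
    by (auto simp: mem_nonvertical_lines)
  have "m \<noteq> m'"
  proof
    assume "m = m'"
    with meet e have "b = b'"
      using nonvertical_lines_parallel_disjoint by metis
    with meet e \<open>m = m'\<close> show False by simp
  qed
  with e assms(1) show "(f \<circ> slope) e1 \<noteq> (f \<circ> slope) e2"
    by (simp add: inj_eq)
qed

lemma finite_nonvertical_lines [simp]: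
  "finite (nonvertical_lines :: ('a::{finite,field} \<times> 'a) set set)"
  by (simp add: nonvertical_lines_def)

lemma card_nonvertical_lines:
  "card (nonvertical_lines :: ('a::{finite,field} \<times> 'a) set set) = CARD('a) ^ 2"
proof -
  have "inj (case_prod (nonvertical_line :: 'a \<Rightarrow> 'a \<Rightarrow> _))"
    by (auto simp: inj_on_def)
  then show ?thesis
    by (simp add: nonvertical_lines_def card_image power2_eq_square)
qed

lemma nonvertical_lines_colouring:
  "\<exists>c. proper_edge_colouring (V, nonvertical_lines :: ('a::{finite,field} \<times> 'a) set set) CARD('a) c"
proof -
  obtain f :: "'a \<Rightarrow> nat" where "bij_betw f UNIV {0..<CARD('a)}"
    using ex_bij_betw_finite_nat[of "UNIV :: 'a set"] by auto
  then have "inj f" "\<And>m. f m < CARD('a)"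
    by (auto simp: bij_betw_def)
  then show ?thesis
    by (intro exI[of _ "f \<circ> slope"] proper_edge_colouring_by_slope)
qed

lemma nonvertical_lines_through_point:
  "{L \<in> nonvertical_lines. p \<in> L} = (\<lambda>m. nonvertical_line m (snd p - m * fst p)) ` UNIV"
proof (intro set_eqI iffI)
  fix L
  assume "L \<in> {L \<in> nonvertical_lines. p \<in> L}"
  then obtain m b where "L = nonvertical_line m b" "b = snd p - m * fst p"
    by (auto simp: mem_nonvertical_lines)
  then show "L \<in> (\<lambda>m. nonvertical_line m (snd p - m * fst p)) ` UNIV"
    by blast
next
  fix L
  assume "L \<in> (\<lambda>m. nonvertical_line m (snd p - m * fst p)) ` UNIV"
  then show "L \<in> {L \<in> nonvertical_lines. p \<in> L}"
    by auto
qed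

lemma deg_nonvertical_lines:
  "deg (V, nonvertical_lines :: ('a::{finite,field} \<times> 'a) set set) p = CARD('a)"
  by (simp add: deg_def nonvertical_lines_through_point card_image inj_on_def)

lemma chromatic_index_nonvertical_lines:
  "chromatic_index (V, nonvertical_lines :: ('a::{finite,field} \<times> 'a) set set) = CARD('a)"
proof -
  obtain c where "proper_edge_colouring (V, nonvertical_lines :: ('a \<times> 'a) set set) CARD('a) c"
    using nonvertical_lines_colouring by blast
  then show ?thesis
    by (rule chromatic_index_eqI) (simp_all add: deg_nonvertical_lines)
qed

section \<open>Deleting all vertical lines but one\<close>

definition hat_lines :: "('a::field \<times> 'a) set set" where
  "hat_lines = insert (vertical_line 0) nonvertical_lines"

lemma vertical_line_notin_nonvertical_lines [simp]: "vertical_line a \<notin> nonvertical_lines"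
  by (auto simp: mem_nonvertical_lines)

lemma vertical_line_zero_in_hat_lines [simp]: "vertical_line 0 \<in> hat_lines"
  by (simp add: hat_lines_def)

lemma hat_lines_eq: "hat_lines = affine_lines - vertical_line ` (- {0})"
  unfolding hat_lines_def affine_lines_eq by auto

lemma hat_lines_subset_affine_lines: "hat_lines \<subseteq> affine_lines"
  unfolding hat_lines_eq by blast

lemma finite_hat_lines [simp]: "finite (hat_lines :: ('a::{finite,field} \<times> 'a) set set)"
  by (simp add: hat_lines_def)

lemma card_hat_lines: "card (hat_lines :: ('a::{finite,field} \<times> 'a) set set) = CARD('a) ^ 2 + 1"
  by (simp add: hat_lines_def card_nonvertical_lines)

lemma deg_hat_lines:
  "deg (V, hat_lines :: ('a::{finite,field} \<times> 'a) set set) p = CARD('a) + (if fst p = 0 then 1 else 0)"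
  by (simp add: hat_lines_def deg_insert_edge deg_nonvertical_lines)

lemma hat_lines_colouring:
  "\<exists>c. proper_edge_colouring (V, hat_lines :: ('a::{finite,field} \<times> 'a) set set) (CARD('a) + 1) c"
  using nonvertical_lines_colouring[where 'a = 'a] proper_edge_colouring_insert_fresh
  unfolding hat_lines_def by fastforce

lemma chromatic_index_hat_lines:
  "chromatic_index (V, hat_lines :: ('a::{finite,field} \<times> 'a) set set) = CARD('a) + 1"
proof -
  obtain c where "proper_edge_colouring (V, hat_lines :: ('a \<times> 'a) set set) (CARD('a) + 1) c"
    using hat_lines_colouring by blast
  then show ?thesis
    by (rule chromatic_index_eqI[where x = "(0, 0)"]) (simp_all add: deg_hat_lines)
qed

lemma critical_edges_hat_lines:
  "{e \<in> hat_lines. critical_edge (V, hat_lines :: ('a::{finite,field} \<times> 'a) set set) e} =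
    {vertical_line 0}"
proof -
  obtain c where c: "proper_edge_colouring (V, hat_lines :: ('a \<times> 'a) set set) (CARD('a) + 1) c"
    using hat_lines_colouring by blast
  have not_critical: "\<not> critical_edge (V, hat_lines) (nonvertical_line m b)" for m b :: 'a
    \<comment> \<open>the point \<open>(0, b + 1)\<close> of the line \<open>x = 0\<close> avoids the deleted line\<close>
    by (rule not_critical_edgeI[OF _ c, where x = "(0, b + 1)"]) (simp_all add: deg_hat_lines)
  have "hat_lines - {vertical_line 0} = (nonvertical_lines :: ('a \<times> 'a) set set)"
    by (auto simp: hat_lines_def)
  then have "critical_edge (V, hat_lines :: ('a \<times> 'a) set set) (vertical_line 0)"
    by (simp add: critical_edge_def chromatic_index_hat_lines chromatic_index_nonvertical_lines)
  with not_critical show ?thesis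
    unfolding hat_lines_def nonvertical_lines_def by auto
qed

lemma hat_lines_max_degree_edges:
  "{e \<in> hat_lines. \<forall>x\<in>e. deg (V, hat_lines :: ('a::{finite,field} \<times> 'a) set set) x = CARD('a) + 1} =
    {vertical_line 0}"
proof (intro set_eqI iffI)
  fix e :: "('a \<times> 'a) set"
  assume e: "e \<in> {e \<in> hat_lines. \<forall>x\<in>e. deg (V, hat_lines) x = CARD('a) + 1}"
  show "e \<in> {vertical_line 0}"
  proof (simp, rule card_subset_eq)
    show "e \<subseteq> vertical_line 0"
      using e by (auto simp: deg_hat_lines split: if_splits)
    have "e \<in> affine_lines"
      using e hat_lines_subset_affine_lines by blast
    then show "card e = card (vertical_line (0 :: 'a))"
      by (simp add: card_affine_line card_vertical_line)
  qed simp
qed (auto simp: deg_hat_lines)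

theorem proposition4p2:
  fixes k :: nat
  assumes "k = CARD('a)"
  shows "\<exists>(V :: ('a::{finite,field} \<times> 'a) set) (E :: ('a \<times> 'a) set set) D.
     V = fst (field_plane :: ('a \<times> 'a) set \<times> _) \<and>
     D \<subseteq> snd (field_plane :: ('a \<times> 'a) set \<times> _) \<and> card D = k - 1 \<and>
     (\<forall>L1\<in>D. \<forall>L2\<in>D. parallel_lines L1 L2) \<and>
     E = snd (field_plane :: ('a \<times> 'a) set \<times> _) - D \<and>
     hyperedge_set (V, E) \<and> linear_hg (V, E) \<and> uniform_hg k (V, E) \<and>
     card V = k ^ 2 \<and> card E = k ^ 2 + 1 \<and>
     chromatic_index (V, E) = k + 1 \<and>
     (\<exists>e. e \<subseteq> V \<and> e \<notin> E \<and> linear_hg (V, insert e E) \<and> uniform_hg k (V, insert e E)) \<and>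
     (\<exists>e0\<in>E.
        (\<forall>x\<in>e0. deg (V, E) x = k + 1) \<and> (\<forall>x\<in>V - e0. deg (V, E) x \<ge> k) \<and>
        (\<forall>e\<in>E. (\<forall>x\<in>e. deg (V, E) x = k + 1) \<and> (\<forall>x\<in>V - e. deg (V, E) x \<ge> k) \<longrightarrow> e = e0) \<and>
        {e \<in> E. critical_edge (V, E) e} = {e0})"
proof -
  let ?E = "hat_lines :: ('a \<times> 'a) set set"
  let ?D = "vertical_line ` (- {0}) :: ('a \<times> 'a) set set"
  have extendable: "vertical_line 1 \<notin> ?E" "insert (vertical_line 1) ?E \<subseteq> affine_lines"
    using hat_lines_subset_affine_lines vertical_line_in_affine_lines by (auto simp: hat_lines_def)
  have unique: "\<forall>e\<in>?E. (\<forall>x\<in>e. deg (UNIV, ?E) x = k + 1) \<and> (\<forall>x\<in>UNIV - e. k \<le> deg (UNIV, ?E) x)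
      \<longrightarrow> e = vertical_line 0"
    using hat_lines_max_degree_edges[of UNIV] assms by blast
  show ?thesis
    unfolding field_plane_def fst_conv snd_conv
  proof (rule exI[of _ UNIV], rule exI[of _ ?E], rule exI[of _ ?D], intro conjI refl)
    show "?D \<subseteq> affine_lines" by (auto simp: affine_lines_eq)
    show "card ?D = k - 1" using assms by (simp add: card_image inj_on_def Compl_eq_Diff_UNIV)
    show "\<forall>L1\<in>?D. \<forall>L2\<in>?D. parallel_lines L1 L2" by (auto simp: parallel_vertical_lines)
    show "?E = affine_lines - ?D" by (rule hat_lines_eq)
    show "hyperedge_set (UNIV, ?E)" by (simp add: hyperedge_set_def)
    show "linear_hg (UNIV, ?E)" by (rule linear_hg_affine_lines[OF hat_lines_subset_affine_lines])
    show "uniform_hg k (UNIV, ?E)"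
      unfolding assms by (rule uniform_hg_affine_lines[OF hat_lines_subset_affine_lines])
    show "card (UNIV :: ('a \<times> 'a) set) = k ^ 2" using assms by (simp add: power2_eq_square)
    show "card ?E = k ^ 2 + 1" "chromatic_index (UNIV, ?E) = k + 1"
      using assms by (simp_all add: card_hat_lines chromatic_index_hat_lines)
    show "\<exists>e. e \<subseteq> UNIV \<and> e \<notin> ?E \<and> linear_hg (UNIV, insert e ?E) \<and> uniform_hg k (UNIV, insert e ?E)"
      using extendable unfolding assms
      by (intro exI[of _ "vertical_line 1"] conjI linear_hg_affine_lines uniform_hg_affine_lines) auto
    show "\<exists>e0\<in>?E. (\<forall>x\<in>e0. deg (UNIV, ?E) x = k + 1) \<and> (\<forall>x\<in>UNIV - e0. k \<le> deg (UNIV, ?E) x) \<and>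
        (\<forall>e\<in>?E. (\<forall>x\<in>e. deg (UNIV, ?E) x = k + 1) \<and> (\<forall>x\<in>UNIV - e. k \<le> deg (UNIV, ?E) x)
           \<longrightarrow> e = e0) \<and>
        {e \<in> ?E. critical_edge (UNIV, ?E) e} = {e0}"
      using assms
      by (intro bexI[of _ "vertical_line 0"] conjI unique)
        (auto simp: deg_hat_lines critical_edges_hat_lines)
  qed
qed

end
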